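(* Let $G$ be a $K_4$-free circular-arc graph with $n = |V(G)| \geq 2$ vertices. Then $G$ has at most $2n$ edges.
   Context: A circular-arc graph is the intersection graph of a finite family of arcs of a circle. A graph is $K_4$-free if it contains no complete subgraph on $4$ vertices. *)

theory Defs
  imports Complex_Main
begin

text \<open>The circle is modelled as the half-open interval [0,1) (i.e. R/Z).
  A (closed) arc is given by a starting point a and a length l with 0 <= l <= 1;
  it consists of the points reached by going counterclockwise from a by at most l.
  Length 1 gives the whole circle.\<close>

definition circle_arc :: "real \<Rightarrow> real \<Rightarrow> real set" where
  "circle_arc a l = {x. 0 \<le> x \<and> x < 1 \<and> frac (x - a) \<le> l}"

definition is_arc :: "real set \<Rightarrow> bool" where
  "is_arc A \<longleftrightarrow> (\<exists>a l. 0 \<le> l \<and> l \<le> 1 \<and> A = circle_arc a l)"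

definition simple_graph :: "'a set \<Rightarrow> ('a \<Rightarrow> 'a \<Rightarrow> bool) \<Rightarrow> bool" where
  "simple_graph V E \<longleftrightarrow> finite V \<and> (\<forall>u v. E u v \<longrightarrow> E v u) \<and> (\<forall>v. \<not> E v v)
     \<and> (\<forall>u v. E u v \<longrightarrow> u \<in> V \<and> v \<in> V)"

definition edges :: "'a set \<Rightarrow> ('a \<Rightarrow> 'a \<Rightarrow> bool) \<Rightarrow> 'a set set" where
  "edges V E = {{u, v} | u v. u \<in> V \<and> v \<in> V \<and> E u v}"

definition circular_arc_graph :: "'a set \<Rightarrow> ('a \<Rightarrow> 'a \<Rightarrow> bool) \<Rightarrow> bool" where
  "circular_arc_graph V E \<longleftrightarrow> (\<exists>arc :: 'a \<Rightarrow> real set.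
      (\<forall>v\<in>V. is_arc (arc v)) \<and>
      (\<forall>u\<in>V. \<forall>v\<in>V. u \<noteq> v \<longrightarrow> (E u v \<longleftrightarrow> arc u \<inter> arc v \<noteq> {})))"

definition K4_free :: "'a set \<Rightarrow> ('a \<Rightarrow> 'a \<Rightarrow> bool) \<Rightarrow> bool" where
  "K4_free V E \<longleftrightarrow> \<not> (\<exists>S \<subseteq> V. card S = 4 \<and> (\<forall>u\<in>S. \<forall>v\<in>S. u \<noteq> v \<longrightarrow> E u v))"

end

theory Submission
  imports Defs
begin

text \<open>Every edge of an intersection graph of arcs can be oriented towards an arc containing the
  starting point of the other one: of two meeting arcs, the one whose start is passed first when
  walking backwards from a common point contains the start of the other. A point lying on four arcs
  would give a \<open>K\<^sub>4\<close>, so the start of each arc lies on at most two other arcs. Hence every vertex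
  receives at most two edges in this orientation, and there are at most \<open>2n\<close> edges.\<close>

lemma frac_diff_frac_le:
  fixes x a b :: real
  assumes "frac (x - a) \<le> frac (x - b)"
  shows "frac (frac a - b) \<le> frac (x - b)"
proof -
  have "frac (frac a - b) = frac (x - b) - frac (x - a)"
    unfolding frac_unique_iff
  proof (intro conjI)
    have "frac a - b - (frac (x - b) - frac (x - a)) = of_int (\<lfloor>x - b\<rfloor> - \<lfloor>x - a\<rfloor> - \<lfloor>a\<rfloor>)"
      by (simp add: frac_def)
    then show "frac a - b - (frac (x - b) - frac (x - a)) \<in> \<int>"
      by (metis Ints_of_int)
    show "0 \<le> frac (x - b) - frac (x - a)" using assms by simp
    show "frac (x - b) - frac (x - a) < 1"
      using frac_lt_1[of "x - b"] frac_ge_0[of "x - a"] by linarith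
  qed
  then show ?thesis using frac_ge_0[of "x - a"] by linarith
qed

lemma frac_start_in_circle_arc:
  assumes "0 \<le> l"
  shows "frac a \<in> circle_arc a l"
proof -
  have "frac a - a = of_int (- \<lfloor>a\<rfloor>)" by (simp add: frac_def)
  then have "frac (frac a - a) = 0" by simp
  with assms have "frac (frac a - a) \<le> l" by linarith
  then show ?thesis
    using frac_lt_1[of a] frac_ge_0[of a] unfolding circle_arc_def by blast
qed

lemma circle_arc_meet_contains_start:
  assumes "circle_arc a l \<inter> circle_arc b m \<noteq> {}"
  shows "frac a \<in> circle_arc b m \<or> frac b \<in> circle_arc a l"
proof -
  obtain x where xa: "frac (x - a) \<le> l" and xb: "frac (x - b) \<le> m"
    using assms unfolding circle_arc_def by auto
  show ?thesis
  proof (cases "frac (x - a) \<le> frac (x - b)")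
    case True
    with frac_diff_frac_le xb have "frac (frac a - b) \<le> m" by fastforce
    then show ?thesis unfolding circle_arc_def using frac_lt_1 by auto
  next
    case False
    then have "frac (x - b) \<le> frac (x - a)" by simp
    with frac_diff_frac_le xa have "frac (frac b - a) \<le> l" by fastforce
    then show ?thesis unfolding circle_arc_def using frac_lt_1 by auto
  qed
qed

lemma circular_arc_graphE:
  assumes "circular_arc_graph V E"
  obtains a l :: "'a \<Rightarrow> real"
  where "\<And>v. v \<in> V \<Longrightarrow> 0 \<le> l v"
    and "\<And>u v. u \<in> V \<Longrightarrow> v \<in> V \<Longrightarrow> u \<noteq> v \<Longrightarrow>
           E u v \<longleftrightarrow> circle_arc (a u) (l u) \<inter> circle_arc (a v) (l v) \<noteq> {}"
proof -
  obtain arc :: "'a \<Rightarrow> real set" where arcs: "\<forall>v\<in>V. is_arc (arc v)"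
    and adj: "\<forall>u\<in>V. \<forall>v\<in>V. u \<noteq> v \<longrightarrow> (E u v \<longleftrightarrow> arc u \<inter> arc v \<noteq> {})"
    using assms unfolding circular_arc_graph_def by blast
  have "\<forall>v\<in>V. \<exists>al. 0 \<le> snd al \<and> arc v = circle_arc (fst al) (snd al)"
    using arcs unfolding is_arc_def by fastforce
  then obtain f where f: "\<forall>v\<in>V. 0 \<le> snd (f v) \<and> arc v = circle_arc (fst (f v)) (snd (f v))"
    by metis
  show thesis
    by (rule that[of "snd \<circ> f" "fst \<circ> f"]) (use f adj in auto)
qed

lemma K4_free_clique_card_le_3:
  assumes "K4_free V E" and "finite S" and "S \<subseteq> V"
    and "\<And>u v. u \<in> S \<Longrightarrow> v \<in> S \<Longrightarrow> u \<noteq> v \<Longrightarrow> E u v"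
  shows "card S \<le> 3"
proof (rule ccontr)
  assume "\<not> card S \<le> 3"
  then have "4 \<le> card S" by simp
  then obtain T where "T \<subseteq> S" "card T = 4" by (rule obtain_subset_with_card_n)
  moreover have "T \<subseteq> V" using \<open>T \<subseteq> S\<close> assms(3) by blast
  moreover have "\<forall>u\<in>T. \<forall>v\<in>T. u \<noteq> v \<longrightarrow> E u v" using \<open>T \<subseteq> S\<close> assms(4) by blast
  ultimately show False using assms(1) unfolding K4_free_def by blast
qed

lemma card_edges_le_orientation:
  assumes "finite V" and "\<And>w. w \<in> V \<Longrightarrow> N w \<subseteq> V" and "\<And>w. w \<in> V \<Longrightarrow> card (N w) \<le> k"
    and "\<And>u v. u \<in> V \<Longrightarrow> v \<in> V \<Longrightarrow> E u v \<Longrightarrow> v \<in> N u \<or> u \<in> N v"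
  shows "card (edges V E) \<le> k * card V"
proof -
  let ?U = "\<Union>w\<in>V. (\<lambda>v. {w, v}) ` N w"
  have fin_N: "finite (N w)" if "w \<in> V" for w
    using assms(1,2) that finite_subset by blast
  have "edges V E \<subseteq> ?U"
    unfolding edges_def using assms(4) by (fastforce simp: insert_commute)
  moreover have "finite ?U" using assms(1) fin_N by blast
  ultimately have "card (edges V E) \<le> card ?U" by (rule card_mono[rotated])
  also have "\<dots> \<le> (\<Sum>w\<in>V. card ((\<lambda>v. {w, v}) ` N w))"
    using card_UN_le[OF assms(1)] .
  also have "\<dots> \<le> (\<Sum>w\<in>V. k)"
  proof (rule sum_mono)
    fix w assume "w \<in> V"
    show "card ((\<lambda>v. {w, v}) ` N w) \<le> k"
      using card_image_le[OF fin_N[OF \<open>w \<in> V\<close>]] assms(3)[OF \<open>w \<in> V\<close>] by (rule le_trans)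
  qed
  finally show ?thesis by (simp add: mult.commute)
qed

theorem lemma2:
  fixes V :: "'a set" and E :: "'a \<Rightarrow> 'a \<Rightarrow> bool"
  assumes "simple_graph V E"
    and "circular_arc_graph V E"
    and "K4_free V E"
    and "card V \<ge> 2"
  shows "card (edges V E) \<le> 2 * card V"
proof -
  have fin: "finite V" and irrefl: "\<And>v. \<not> E v v"
    using assms(1) unfolding simple_graph_def by auto
  obtain a l where l: "\<And>v. v \<in> V \<Longrightarrow> 0 \<le> l v"
    and adj: "\<And>u v. u \<in> V \<Longrightarrow> v \<in> V \<Longrightarrow> u \<noteq> v \<Longrightarrow>
                E u v \<longleftrightarrow> circle_arc (a u) (l u) \<inter> circle_arc (a v) (l v) \<noteq> {}"
    by (rule circular_arc_graphE[OF assms(2)]) blast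
  define N where "N w = {v \<in> V. frac (a w) \<in> circle_arc (a v) (l v)} - {w}" for w
  have N_card: "card (N w) \<le> 2" if "w \<in> V" for w
  proof -
    let ?S = "{v \<in> V. frac (a w) \<in> circle_arc (a v) (l v)}"
    have "card ?S \<le> 3"
    proof (rule K4_free_clique_card_le_3[OF assms(3)])
      fix u v assume "u \<in> ?S" "v \<in> ?S" "u \<noteq> v"
      then show "E u v" using adj by blast
    qed (use fin in auto)
    moreover have "w \<in> ?S" using that l frac_start_in_circle_arc by blast
    ultimately show ?thesis unfolding N_def using fin by (simp add: card_Diff_singleton)
  qed
  have N_orient: "v \<in> N u \<or> u \<in> N v" if "u \<in> V" "v \<in> V" "E u v" for u v
  proof -
    have "u \<noteq> v" using that irrefl by blast
    then have "circle_arc (a u) (l u) \<inter> circle_arc (a v) (l v) \<noteq> {}"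
      using adj that by blast
    then have "frac (a u) \<in> circle_arc (a v) (l v) \<or> frac (a v) \<in> circle_arc (a u) (l u)"
      by (rule circle_arc_meet_contains_start)
    then show ?thesis using \<open>u \<noteq> v\<close> that unfolding N_def by auto
  qed
  show ?thesis
    by (rule card_edges_le_orientation[OF fin _ N_card N_orient]) (simp add: N_def subset_iff)
qed

end
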